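(* Let $\Pi$ be an $\mathrm{LP}^{\mathrm{MLN}}$ program with ground instances $w_i:\mathit{Head}_i(\mathbf c)\leftarrow \mathit{Body}_i(\mathbf c)$ in $Gr(\Pi)$. Let $SAT(\Pi)$ consist of the rules $\mathtt{sat}(i,w_i,\mathbf c)\leftarrow \mathit{Head}_i(\mathbf c)$ and $\mathtt{sat}(i,w_i,\mathbf c)\leftarrow \mathtt{not}\ \mathit{Body}_i(\mathbf c)$, and $ORIGIN(\Pi)$ consist of the rules $\mathit{Head}_i(\mathbf c)\leftarrow \mathit{Body}_i(\mathbf c),\ \mathtt{not}\ \mathtt{not}\ \mathtt{sat}(i,w_i,\mathbf c)$, for every such ground instance. Then the map \[ \phi(I)=I\cup\{\mathtt{sat}(i,w_i,\mathbf c) : w_i:\mathit{Head}_i(\mathbf c)\leftarrow\mathit{Body}_i(\mathbf c)\in Gr(\Pi),\ I\models \mathit{Body}_i(\mathbf c)\rightarrow \mathit{Head}_i(\mathbf c)\} \] is a one-to-one correspondence between $\mathrm{SM}[\Pi]$ and the set of stable models of $SAT(\Pi)\cup ORIGIN(\Pi)$.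
   Context: An $\mathrm{LP}^{\mathrm{MLN}}$ program is a finite set of weighted rules $w:R$ (indexed by $i$), where $R$ is a rule $\mathit{Head}\leftarrow\mathit{Body}$ ($\mathit{Head}$ a possibly empty disjunction of atoms, $\mathit{Body}$ a conjunction of literals possibly with default negation $\mathtt{not}$) and $w$ is a real number or the symbol $\alpha$ (infinite weight). The Herbrand universe is finite; $Gr(\Pi)$ is obtained by replacing the global variables $\mathbf x$ of each rule by all tuples $\mathbf c$ from the Herbrand universe, each instance keeping the weight. For ground $\Pi$ and interpretation $I$: $\overline{\Pi}$ drops weights, $\Pi_I$ is the set of rules of $\Pi$ satisfied by $I$, and $\mathrm{SM}[\Pi]=\{I: I\text{ is a stable model of }\overline{\Pi_I}\}$. Stable models of programs with nested negation ($\mathtt{not}\ \mathtt{not}$) are understood in the standard reduct-based sense. $\mathtt{sat}(i,w_i,\mathbf c)$ are fresh atoms. *)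

theory Defs
  imports Complex_Main
begin

datatype 'a form = Atom 'a | Top | Bot | Neg "'a form"
  | Conj "'a form" "'a form" | Disj "'a form" "'a form"

fun sat_f :: "'a set \<Rightarrow> 'a form \<Rightarrow> bool" where
  "sat_f I (Atom a) = (a \<in> I)"
| "sat_f I Top = True"
| "sat_f I Bot = False"
| "sat_f I (Neg F) = (\<not> sat_f I F)"
| "sat_f I (Conj F G) = (sat_f I F \<and> sat_f I G)"
| "sat_f I (Disj F G) = (sat_f I F \<or> sat_f I G)"

fun reduct_f :: "'a set \<Rightarrow> 'a form \<Rightarrow> 'a form" where
  "reduct_f X (Atom a) = Atom a"
| "reduct_f X Top = Top"
| "reduct_f X Bot = Bot"
| "reduct_f X (Neg F) = (if sat_f X F then Bot else Top)"
| "reduct_f X (Conj F G) = Conj (reduct_f X F) (reduct_f X G)"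
| "reduct_f X (Disj F G) = Disj (reduct_f X F) (reduct_f X G)"

datatype 'a rule = Rule (head: "'a list") (body: "'a form")

definition sat_rule :: "'a set \<Rightarrow> 'a rule \<Rightarrow> bool" where
  "sat_rule I r = (sat_f I (body r) \<longrightarrow> (\<exists>a\<in>set (head r). a \<in> I))"

definition reduct_rule :: "'a set \<Rightarrow> 'a rule \<Rightarrow> 'a rule" where
  "reduct_rule X r = Rule (head r) (reduct_f X (body r))"

definition stable_model :: "'a rule set \<Rightarrow> 'a set \<Rightarrow> bool" where
  "stable_model P X =
     ((\<forall>r\<in>P. sat_rule X (reduct_rule X r)) \<and>
      (\<forall>Y. Y \<subset> X \<longrightarrow> \<not> (\<forall>r\<in>P. sat_rule Y (reduct_rule X r))))"

datatype 'a lit = PosL 'a | NotL 'a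

fun lit_form :: "'a lit \<Rightarrow> 'a form" where
  "lit_form (PosL a) = Atom a"
| "lit_form (NotL a) = Neg (Atom a)"

definition body_form :: "'a lit list \<Rightarrow> 'a form" where
  "body_form ls = foldr (\<lambda>l F. Conj (lit_form l) F) ls Top"

definition head_form :: "'a list \<Rightarrow> 'a form" where
  "head_form as = foldr (\<lambda>a F. Disj (Atom a) F) as Bot"

text \<open>Weights: a real number or alpha (infinite weight).\<close>
datatype weight = W real | Alpha

text \<open>The ground program Gr(Pi) is given by a finite set Gr of ground instances (i, c)
(rule index i, tuple c of Herbrand-universe constants for the global variables),
with head hds (i,c), body bds (i,c), and weight w i of rule i.\<close>

definition gr_rule :: "('i \<times> 'c \<Rightarrow> 'a list) \<Rightarrow> ('i \<times> 'c \<Rightarrow> 'a lit list) \<Rightarrow> 'i \<times> 'c \<Rightarrow> 'a rule" where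
  "gr_rule hds bds k = Rule (hds k) (body_form (bds k))"

definition SM :: "('i \<times> 'c) set \<Rightarrow> ('i \<times> 'c \<Rightarrow> 'a list) \<Rightarrow> ('i \<times> 'c \<Rightarrow> 'a lit list) \<Rightarrow> 'a set set" where
  "SM Gr hds bds = {I. stable_model {gr_rule hds bds k | k. k \<in> Gr \<and> sat_rule I (gr_rule hds bds k)} I}"

datatype ('a, 'i, 'c) xatom = Orig 'a | SatA 'i weight 'c

fun sat_atom :: "('i \<Rightarrow> weight) \<Rightarrow> 'i \<times> 'c \<Rightarrow> ('a, 'i, 'c) xatom" where
  "sat_atom w (i, c) = SatA i (w i) c"

definition SATP :: "('i \<times> 'c) set \<Rightarrow> ('i \<Rightarrow> weight) \<Rightarrow> ('i \<times> 'c \<Rightarrow> 'a list) \<Rightarrow> ('i \<times> 'c \<Rightarrow> 'a lit list)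
    \<Rightarrow> ('a, 'i, 'c) xatom rule set" where
  "SATP Gr w hds bds =
     {Rule [sat_atom w k] (map_form Orig (head_form (hds k))) | k. k \<in> Gr} \<union>
     {Rule [sat_atom w k] (Neg (map_form Orig (body_form (bds k)))) | k. k \<in> Gr}"

definition ORIGINP :: "('i \<times> 'c) set \<Rightarrow> ('i \<Rightarrow> weight) \<Rightarrow> ('i \<times> 'c \<Rightarrow> 'a list) \<Rightarrow> ('i \<times> 'c \<Rightarrow> 'a lit list)
    \<Rightarrow> ('a, 'i, 'c) xatom rule set" where
  "ORIGINP Gr w hds bds =
     {Rule (map Orig (hds k))
        (Conj (map_form Orig (body_form (bds k))) (Neg (Neg (Atom (sat_atom w k))))) | k. k \<in> Gr}"

definition phi :: "('i \<times> 'c) set \<Rightarrow> ('i \<Rightarrow> weight) \<Rightarrow> ('i \<times> 'c \<Rightarrow> 'a list) \<Rightarrow> ('i \<times> 'c \<Rightarrow> 'a lit list)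
    \<Rightarrow> 'a set \<Rightarrow> ('a, 'i, 'c) xatom set" where
  "phi Gr w hds bds I = Orig ` I \<union> {sat_atom w k | k. k \<in> Gr \<and> sat_rule I (gr_rule hds bds k)}"

end

theory Submission
  imports Defs
begin

text \<open>In the reduct of SAT(Pi) \<union> ORIGIN(Pi) with respect to X, the double negation in ORIGIN
turns the rule for instance k into "head \<leftarrow> body" exactly when sat(k) \<in> X, and the SAT rules
force sat(k) whenever the original rule is satisfied. Hence on a stable model X the sat atoms
record precisely the rules satisfied by I = X \<inter> original atoms, and the reduct restricted to the
original atoms is the reduct of Pi_I with respect to I; minimality transfers in both directions.\<close>

definition models_reduct :: "'a rule set \<Rightarrow> 'a set \<Rightarrow> 'a set \<Rightarrow> bool" where
  "models_reduct P X Y \<longleftrightarrow> (\<forall>r\<in>P. sat_rule Y (reduct_rule X r))"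

lemma stable_model_iff_models_reduct:
  "stable_model P X \<longleftrightarrow> models_reduct P X X \<and> (\<forall>Y. Y \<subset> X \<longrightarrow> \<not> models_reduct P X Y)"
  unfolding stable_model_def models_reduct_def ..

lemma sat_f_reduct_f_self: "sat_f X (reduct_f X F) \<longleftrightarrow> sat_f X F"
  by (induction F) auto

lemma sat_rule_reduct_rule_self: "sat_rule X (reduct_rule X r) \<longleftrightarrow> sat_rule X r"
  by (simp add: sat_rule_def reduct_rule_def sat_f_reduct_f_self)

lemma sat_f_head_form: "sat_f I (head_form as) \<longleftrightarrow> (\<exists>a\<in>set as. a \<in> I)"
  by (induction as) (auto simp: head_form_def)

lemma reduct_f_head_form: "reduct_f X (head_form as) = head_form as"
  by (induction as) (auto simp: head_form_def)

lemma sat_rule_gr_rule: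
  "sat_rule I (gr_rule hds bds k) \<longleftrightarrow> (sat_f I (body_form (bds k)) \<longrightarrow> (\<exists>a\<in>set (hds k). a \<in> I))"
  by (simp add: gr_rule_def sat_rule_def)

definition orig_atoms :: "('a, 'i, 'c) xatom set \<Rightarrow> 'a set" where
  "orig_atoms X = {a. Orig a \<in> X}"

lemma mem_orig_atoms [simp]: "a \<in> orig_atoms X \<longleftrightarrow> Orig a \<in> X"
  by (simp add: orig_atoms_def)

lemma sat_f_map_form_Orig: "sat_f X (map_form Orig F) \<longleftrightarrow> sat_f (orig_atoms X) F"
  by (induction F) auto

lemma reduct_f_map_form_Orig:
  "reduct_f X (map_form Orig F) = map_form Orig (reduct_f (orig_atoms X) F)"
  by (induction F) (auto simp: sat_f_map_form_Orig)

lemma Orig_neq_sat_atom [simp]: "Orig a \<noteq> sat_atom w k" "sat_atom w k \<noteq> Orig a"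
  by (cases k; simp)+

lemma orig_atoms_phi [simp]: "orig_atoms (phi Gr w hds bds I) = I"
  by (auto simp: phi_def)

lemma sat_atom_mem_phi:
  "sat_atom w k \<in> phi Gr w hds bds I \<longleftrightarrow> k \<in> Gr \<and> sat_rule I (gr_rule hds bds k)"
  by (cases k) (auto simp: phi_def)

lemma mem_phiE:
  assumes "x \<in> phi Gr w hds bds I"
  obtains a where "x = Orig a" "a \<in> I"
    | k where "x = sat_atom w k" "k \<in> Gr" "sat_rule I (gr_rule hds bds k)"
  using assms unfolding phi_def by blast

lemma models_reduct_SM_program:
  "models_reduct {gr_rule hds bds k | k. k \<in> Gr \<and> sat_rule I (gr_rule hds bds k)} I J \<longleftrightarrow>
   (\<forall>k\<in>Gr. sat_rule I (gr_rule hds bds k) \<longrightarrow> sat_rule J (reduct_rule I (gr_rule hds bds k)))"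
  unfolding models_reduct_def by blast

lemma models_reduct_translation:
  "models_reduct (SATP Gr w hds bds \<union> ORIGINP Gr w hds bds) X Y \<longleftrightarrow>
   (\<forall>k\<in>Gr.
      ((\<exists>a\<in>set (hds k). a \<in> orig_atoms Y) \<or> \<not> sat_f (orig_atoms X) (body_form (bds k))
         \<longrightarrow> sat_atom w k \<in> Y) \<and>
      (sat_atom w k \<in> X
         \<longrightarrow> sat_rule (orig_atoms Y) (reduct_rule (orig_atoms X) (gr_rule hds bds k))))"
  unfolding models_reduct_def SATP_def ORIGINP_def Setcompr_eq_image ball_Un
  by (simp add: sat_rule_def reduct_rule_def gr_rule_def sat_f_map_form_Orig
      reduct_f_map_form_Orig reduct_f_head_form sat_f_head_form del: sat_atom.simps)
     blast

lemma stable_model_phi: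
  assumes "I \<in> SM Gr hds bds"
  shows "stable_model (SATP Gr w hds bds \<union> ORIGINP Gr w hds bds) (phi Gr w hds bds I)"
    (is "stable_model ?P ?X")
proof -
  have I_minimal: "\<not> models_reduct {gr_rule hds bds k | k. k \<in> Gr \<and> sat_rule I (gr_rule hds bds k)} I J"
    if "J \<subset> I" for J
    using assms that unfolding SM_def stable_model_iff_models_reduct by blast
  have "models_reduct ?P ?X ?X"
    unfolding models_reduct_translation
    by (auto simp: sat_atom_mem_phi sat_rule_gr_rule sat_rule_reduct_rule_self)
  moreover have "\<not> models_reduct ?P ?X Y" if "Y \<subset> ?X" for Y
  proof
    assume Y: "models_reduct ?P ?X Y"
    have "orig_atoms Y \<subseteq> I"
      using that by (auto simp: phi_def)
    moreover have "models_reduct {gr_rule hds bds k | k. k \<in> Gr \<and> sat_rule I (gr_rule hds bds k)} I (orig_atoms Y)"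
      using Y unfolding models_reduct_translation models_reduct_SM_program
      by (simp add: sat_atom_mem_phi)
    ultimately have YI: "orig_atoms Y = I"
      using I_minimal by blast
    have "?X \<subseteq> Y"
    proof
      fix x assume "x \<in> ?X"
      then show "x \<in> Y"
      proof (cases rule: mem_phiE)
        case (1 a)
        then show ?thesis using YI by auto
      next
        case (2 k)
        then show ?thesis
          using Y YI unfolding models_reduct_translation by (auto simp: sat_rule_gr_rule)
      qed
    qed
    then show False using that by blast
  qed
  ultimately show ?thesis unfolding stable_model_iff_models_reduct by blast
qed

text \<open>On a model X of the reduct, every satisfied rule has its sat atom in X; minimality removes
all further sat atoms.\<close>
lemma stable_model_eq_phi:
  assumes "stable_model (SATP Gr w hds bds \<union> ORIGINP Gr w hds bds) X"
  shows "X = phi Gr w hds bds (orig_atoms X)"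
proof -
  let ?P = "SATP Gr w hds bds \<union> ORIGINP Gr w hds bds" and ?Y = "phi Gr w hds bds (orig_atoms X)"
  have X: "models_reduct ?P X X" and X_minimal: "\<And>Y. Y \<subset> X \<Longrightarrow> \<not> models_reduct ?P X Y"
    using assms unfolding stable_model_iff_models_reduct by blast+
  have "?Y \<subseteq> X"
  proof
    fix x assume "x \<in> ?Y"
    then show "x \<in> X"
      by (cases rule: mem_phiE) (use X in \<open>auto simp: models_reduct_translation sat_rule_gr_rule\<close>)
  qed
  moreover have "models_reduct ?P X ?Y"
    using X unfolding models_reduct_translation
    by (auto simp: sat_atom_mem_phi sat_rule_gr_rule)
  ultimately show ?thesis
    using X_minimal by blast
qed

lemma stable_model_orig_atoms_SM:
  assumes "stable_model (SATP Gr w hds bds \<union> ORIGINP Gr w hds bds) X"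
  shows "orig_atoms X \<in> SM Gr hds bds"
proof -
  let ?P = "SATP Gr w hds bds \<union> ORIGINP Gr w hds bds" and ?I = "orig_atoms X"
  let ?\<Pi> = "{gr_rule hds bds k | k. k \<in> Gr \<and> sat_rule ?I (gr_rule hds bds k)}"
  have X: "models_reduct ?P X X" and X_minimal: "\<And>Y. Y \<subset> X \<Longrightarrow> \<not> models_reduct ?P X Y"
    using assms unfolding stable_model_iff_models_reduct by blast+
  have sat_atom_X: "sat_atom w k \<in> X \<longleftrightarrow> k \<in> Gr \<and> sat_rule ?I (gr_rule hds bds k)" for k
    using stable_model_eq_phi[OF assms] sat_atom_mem_phi by metis
  have "models_reduct ?\<Pi> ?I ?I"
    unfolding models_reduct_SM_program by (simp add: sat_rule_reduct_rule_self)
  moreover have "\<not> models_reduct ?\<Pi> ?I J" if "J \<subset> ?I" for J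
  proof
    assume J: "models_reduct ?\<Pi> ?I J"
    define Z where "Z = {x \<in> X. \<forall>a. x = Orig a \<longrightarrow> a \<in> J}"
    have orig_Z: "orig_atoms Z = J"
      using that unfolding Z_def by auto
    have "Z \<subset> X"
      using that unfolding Z_def by auto
    moreover have "models_reduct ?P X Z"
      unfolding models_reduct_translation orig_Z
    proof (intro ballI conjI impI)
      fix k assume k: "k \<in> Gr"
      show "sat_atom w k \<in> Z" if "(\<exists>a\<in>set (hds k). a \<in> J) \<or> \<not> sat_f ?I (body_form (bds k))"
      proof -
        have "sat_rule ?I (gr_rule hds bds k)"
          using that \<open>J \<subset> ?I\<close> by (force simp: sat_rule_gr_rule subset_iff)
        then show ?thesis
          using k sat_atom_X unfolding Z_def by auto
      qed
      show "sat_rule J (reduct_rule ?I (gr_rule hds bds k))" if "sat_atom w k \<in> X"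
        using J k that sat_atom_X unfolding models_reduct_SM_program by blast
    qed
    ultimately show False
      using X_minimal by blast
  qed
  ultimately show ?thesis
    unfolding SM_def stable_model_iff_models_reduct by blast
qed

theorem lemma1:
  fixes Gr :: "('i \<times> 'c) set"
    and w :: "'i \<Rightarrow> weight"
    and hds :: "'i \<times> 'c \<Rightarrow> 'a list"
    and bds :: "'i \<times> 'c \<Rightarrow> 'a lit list"
  assumes "finite Gr"
  shows "bij_betw (phi Gr w hds bds) (SM Gr hds bds)
           {X. stable_model (SATP Gr w hds bds \<union> ORIGINP Gr w hds bds) X}"
proof (rule bij_betw_byWitness[where f' = orig_atoms])
  show "\<forall>I\<in>SM Gr hds bds. orig_atoms (phi Gr w hds bds I) = I"
    by simp
  show "\<forall>X\<in>{X. stable_model (SATP Gr w hds bds \<union> ORIGINP Gr w hds bds) X}.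
          phi Gr w hds bds (orig_atoms X) = X"
    using stable_model_eq_phi by fastforce
  show "phi Gr w hds bds ` SM Gr hds bds
          \<subseteq> {X. stable_model (SATP Gr w hds bds \<union> ORIGINP Gr w hds bds) X}"
    using stable_model_phi by blast
  show "orig_atoms ` {X. stable_model (SATP Gr w hds bds \<union> ORIGINP Gr w hds bds) X}
          \<subseteq> SM Gr hds bds"
    using stable_model_orig_atoms_SM by blast
qed

end
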